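(* Suppose $w$ satisfies Assumption 1 and let $h(x)=\int_0^1e^{-xQ_\xi(p)}\,d\bar w(p)$, $x\in\mathbb R$. Then: (i) $h(0)=1$ and $h(x)<\infty$ for all $x\in\mathbb R$; (ii) $h\in C^\infty(\mathbb R)$ and for every integer $k\ge0$ and $x\in\mathbb R$, $$h^{(k)}(x)=\int_0^1[-Q_\xi(p)]^ke^{-xQ_\xi(p)}\,d\bar w(p)=\int_0^1[Q_\xi(p)]^ke^{xQ_\xi(p)}\,dw(p);$$ (iii) for every even $k\ge0$, $h^{(k)}$ is strictly positive and strictly convex on $\mathbb R$, and for every odd $k\ge1$, $h^{(k)}$ is strictly increasing on $\mathbb R$.
   Context: Assumption 1 on $w:[0,1]\to[0,1]$: $w$ is strictly increasing, continuously differentiable, $w(0)=0$, $w(1)=1$, and there exist $c>0$, $\alpha\in(-1,0)$ with $w'(p)\le c[p^\alpha+(1-p)^\alpha]$ for all $p\in(0,1)$. $\bar w(p)=1-w(1-p)$. $Q_\xi=\Phi^{-1}$ is the quantile function of a standard normal random variable $\xi$, $\Phi$ the standard normal distribution function; integrals $d\bar w$, $dw$ are Lebesgue–Stieltjes integrals. *)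

theory Defs
  imports "HOL-Probability.Probability"
begin

definition std_normal_cdf :: "real \<Rightarrow> real" where
  "std_normal_cdf x = (LBINT t:{..x}. std_normal_density t)"

definition std_normal_quantile :: "real \<Rightarrow> real" where
  "std_normal_quantile p = Inf {x. p \<le> std_normal_cdf x}"

definition dual_w :: "(real \<Rightarrow> real) \<Rightarrow> real \<Rightarrow> real" where
  "dual_w w p = 1 - w (1 - p)"

text \<open>Lebesgue--Stieltjes measure on [0,1] induced by a nondecreasing function G on [0,1]
  (G is extended constantly outside [0,1], so the measure lives on [0,1]).\<close>

definition LS_measure :: "(real \<Rightarrow> real) \<Rightarrow> real measure" where
  "LS_measure G = interval_measure (\<lambda>x. G (max 0 (min 1 x)))"

definition strictly_convex :: "(real \<Rightarrow> real) \<Rightarrow> bool" where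
  "strictly_convex f \<longleftrightarrow>
     (\<forall>x y t. x \<noteq> y \<longrightarrow> 0 < t \<longrightarrow> t < 1 \<longrightarrow>
        f ((1 - t) * x + t * y) < (1 - t) * f x + t * f y)"

definition assumption1 :: "(real \<Rightarrow> real) \<Rightarrow> bool" where
  "assumption1 w \<longleftrightarrow>
     w ` {0..1} \<subseteq> {0..1} \<and>
     strict_mono_on {0..1} w \<and>
     continuous_on {0..1} w \<and>
     w C1_differentiable_on {0<..<1} \<and>
     w 0 = 0 \<and> w 1 = 1 \<and>
     (\<exists>c \<alpha>. c > 0 \<and> -1 < \<alpha> \<and> \<alpha> < 0 \<and>
        (\<forall>p\<in>{0<..<1}. deriv w p \<le> c * (p powr \<alpha> + (1 - p) powr \<alpha>)))"

end

theory Submission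
  imports Defs "HOL-Real_Asymp.Real_Asymp"
begin

text \<open>With \<open>U\<close> distributed according to \<open>d(dual_w w)\<close> on \<open>[0, 1]\<close> and \<open>X = - Q(U)\<close>, \<open>h\<close> is
  the moment generating function \<open>x \<mapsto> E[exp (x X)]\<close>. Assumption 1 yields
  \<open>w s, 1 - w (1 - s) \<le> C s\<^sup>\<beta>\<close>, and with the Gaussian tail \<open>\<Phi>(-t) \<le> exp (-t\<^sup>2/2)\<close> this gives
  \<open>P(|X| \<ge> n) \<le> K exp (- \<beta> n\<^sup>2 / 2)\<close>. Hence every exponential moment of \<open>|X|\<close> is finite, and
  \<open>h\<close> can be differentiated under the integral sign arbitrarily often, its \<open>k\<close>-th derivative
  being \<open>x \<mapsto> E[X\<^sup>k exp (x X)]\<close>. As \<open>X \<noteq> 0\<close> almost surely, the even derivatives are strictly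
  positive, so the odd ones are strictly increasing and the even ones strictly convex. The
  representation by \<open>dw\<close> comes from the reflection \<open>p \<mapsto> 1 - p\<close>, which maps \<open>dw\<close> to
  \<open>d(dual_w w)\<close> and satisfies \<open>Q(1 - p) = - Q(p)\<close>.\<close>

lemma abs_exp_minus_one_minus_le: "\<bar>exp u - 1 - u\<bar> \<le> u\<^sup>2 * exp \<bar>u\<bar>" for u :: real
proof -
  have lower: "1 + u \<le> exp u" by (rule exp_ge_add_one_self)
  have upper: "exp u - 1 \<le> u * exp u"
  proof -
    have "exp u * (1 - u) \<le> exp u * exp (- u)"
      using exp_ge_add_one_self[of "- u"] by (intro mult_left_mono) auto
    then show ?thesis by (simp add: exp_minus field_simps)
  qed
  have "exp u - 1 - u \<le> u\<^sup>2 * exp \<bar>u\<bar>"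
  proof (cases "u \<ge> 0")
    case True
    have "exp u - 1 - u \<le> u * (u * exp u)"
      using upper True mult_left_mono[OF upper True] by (simp add: algebra_simps)
    then show ?thesis using True by (simp add: power2_eq_square)
  next
    case False
    have "exp u - 1 - u \<le> (- u) * (1 - exp u)"
      using upper by (simp add: algebra_simps)
    also have "\<dots> \<le> (- u) * (- u)"
      by (rule mult_left_mono) (use lower False in linarith)+
    also have "\<dots> \<le> u\<^sup>2 * exp \<bar>u\<bar>"
      using mult_left_mono[of 1 "exp \<bar>u\<bar>" "u\<^sup>2"] by (simp add: power2_eq_square)
    finally show ?thesis .
  qed
  moreover have "0 \<le> exp u - 1 - u" using lower by linarith
  ultimately show ?thesis by simp
qed

lemma power_le_exp: "0 \<le> u \<Longrightarrow> u ^ k \<le> real k ^ k * exp u" for u :: real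
proof (cases "k = 0")
  case False
  assume u: "0 \<le> u"
  have k: "real k > 0" using False by simp
  have "u / k \<le> exp (u / k)" using exp_ge_add_one_self[of "u / k"] by linarith
  then have "(u / k) ^ k \<le> exp (u / k) ^ k"
    using u k by (intro power_mono) auto
  also have "\<dots> = exp u" using k by (simp add: exp_of_nat_mult[symmetric])
  finally show ?thesis using k by (simp add: power_divide divide_le_eq mult.commute)
qed simp

lemma power_exp_difference_quotient_bound:
  fixes z t h :: real
  assumes h: "h \<noteq> 0" "\<bar>h\<bar> \<le> 1"
  shows "\<bar>(z ^ k * exp ((t + h) * z) - z ^ k * exp (t * z)) / h - z ^ Suc k * exp (t * z)\<bar>
    \<le> \<bar>h\<bar> * (\<bar>z\<bar> ^ (k + 2) * exp ((\<bar>t\<bar> + 1) * \<bar>z\<bar>))"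
proof -
  define u where "u = h * z"
  have "(z ^ k * exp ((t + h) * z) - z ^ k * exp (t * z)) / h - z ^ Suc k * exp (t * z)
      = z ^ k * exp (t * z) * (exp u - 1 - u) / h"
    using h by (simp add: u_def distrib_right exp_add field_simps)
  then have "\<bar>(z ^ k * exp ((t + h) * z) - z ^ k * exp (t * z)) / h - z ^ Suc k * exp (t * z)\<bar>
      = \<bar>z\<bar> ^ k * exp (t * z) * \<bar>exp u - 1 - u\<bar> / \<bar>h\<bar>"
    by (simp add: abs_mult power_abs)
  also have "\<dots> \<le> \<bar>z\<bar> ^ k * exp (t * z) * (u\<^sup>2 * exp \<bar>u\<bar>) / \<bar>h\<bar>"
    by (intro divide_right_mono mult_left_mono abs_exp_minus_one_minus_le) auto
  also have "\<dots> = \<bar>h\<bar> * (\<bar>z\<bar> ^ (k + 2) * (exp (t * z) * exp (\<bar>h\<bar> * \<bar>z\<bar>)))"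
    using h by (simp add: u_def abs_mult power2_eq_square power_add field_simps)
  also have "\<dots> \<le> \<bar>h\<bar> * (\<bar>z\<bar> ^ (k + 2) * exp ((\<bar>t\<bar> + 1) * \<bar>z\<bar>))"
  proof -
    have "t * z \<le> \<bar>t\<bar> * \<bar>z\<bar>" by (metis abs_ge_self abs_mult)
    moreover have "\<bar>h\<bar> * \<bar>z\<bar> \<le> \<bar>z\<bar>" using h mult_right_mono[of "\<bar>h\<bar>" 1 "\<bar>z\<bar>"] by simp
    ultimately show ?thesis
      by (intro mult_left_mono) (auto simp: exp_add[symmetric] distrib_right)
  qed
  finally show ?thesis .
qed

lemma summable_exp_linear_minus_square:
  fixes a b :: real
  assumes "0 < b"
  shows "summable (\<lambda>n::nat. exp (a * real n - b * (real n)\<^sup>2))"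
proof (rule summable_comparison_test_bigo)
  show "summable (\<lambda>n::nat. norm (exp (-1::real) ^ n))" by simp
  show "(\<lambda>n::nat. exp (a * real n - b * (real n)\<^sup>2)) \<in> O(\<lambda>n. exp (-1) ^ n)"
    using assms by real_asymp
qed

lemma exp_le_suminf_indicator:
  fixes a y :: real
  assumes "0 \<le> a" "0 \<le> y"
  shows "ennreal (exp (a * y)) \<le> (\<Sum>n. ennreal (exp (a * (real n + 1))) * indicator {real n..} y)"
proof -
  define m where "m = nat \<lfloor>y\<rfloor>"
  have m: "real m \<le> y" "y \<le> real m + 1" using assms unfolding m_def by linarith+
  have "ennreal (exp (a * y)) \<le> ennreal (exp (a * (real m + 1))) * indicator {real m..} y"
    using m assms by (auto intro!: ennreal_leI mult_left_mono)
  also have "\<dots> \<le> (\<Sum>n. ennreal (exp (a * (real n + 1))) * indicator {real n..} y)"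
    using sum_le_suminf[OF summableI, of "{m}"] by auto
  finally show ?thesis .
qed

section \<open>Exponential moments\<close>

lemma (in finite_measure) integrable_exp_abs_of_gaussian_tail:
  fixes g :: "'a \<Rightarrow> real"
  assumes g[measurable]: "g \<in> borel_measurable M" and b: "0 < b"
    and tail: "\<And>n::nat. measure M {x\<in>space M. real n \<le> \<bar>g x\<bar>} \<le> K * exp (- b * (real n)\<^sup>2)"
  shows "integrable M (\<lambda>x. exp (a * \<bar>g x\<bar>))"
proof -
  define a' where "a' = \<bar>a\<bar>"
  have a': "0 \<le> a'" by (simp add: a'_def)
  have K: "0 \<le> K" using order_trans[OF measure_nonneg tail[of 0]] by simp
  define T where "T n = {x\<in>space M. real n \<le> \<bar>g x\<bar>}" for n :: nat
  have [measurable]: "T n \<in> sets M" for n unfolding T_def by measurable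
  have "(\<integral>\<^sup>+ x. ennreal (norm (exp (a' * \<bar>g x\<bar>))) \<partial>M)
      \<le> (\<integral>\<^sup>+ x. (\<Sum>n. ennreal (exp (a' * (real n + 1))) * indicator (T n) x) \<partial>M)"
    using exp_le_suminf_indicator[OF a']
    by (intro nn_integral_mono) (simp add: T_def indicator_def)
  also have "\<dots> = (\<Sum>n. ennreal (exp (a' * (real n + 1))) * emeasure M (T n))"
    by (simp add: nn_integral_suminf nn_integral_cmult_indicator)
  also have "\<dots> \<le> (\<Sum>n. ennreal (K * exp a' * exp (a' * real n - b * (real n)\<^sup>2)))"
  proof (intro suminf_le summableI)
    fix n
    have "emeasure M (T n) \<le> ennreal (K * exp (- b * (real n)\<^sup>2))"
      using tail[of n] by (simp add: T_def emeasure_eq_measure ennreal_leI)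
    then have "ennreal (exp (a' * (real n + 1))) * emeasure M (T n)
        \<le> ennreal (exp (a' * (real n + 1))) * ennreal (K * exp (- b * (real n)\<^sup>2))"
      by (intro mult_left_mono) auto
    also have "\<dots> = ennreal (K * exp a' * exp (a' * real n - b * (real n)\<^sup>2))"
      using K by (simp add: ennreal_mult[symmetric] exp_add[symmetric] exp_diff algebra_simps)
    finally show "ennreal (exp (a' * (real n + 1))) * emeasure M (T n)
        \<le> ennreal (K * exp a' * exp (a' * real n - b * (real n)\<^sup>2))" .
  qed
  also have "\<dots> < \<infinity>"
    using summable_mult[OF summable_exp_linear_minus_square[OF b], of "K * exp a'" a'] K
    by (simp add: ennreal_suminf_neq_top top.not_eq_extremum)
  finally have "integrable M (\<lambda>x. exp (a' * \<bar>g x\<bar>))"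
    by (intro integrableI_bounded) auto
  then show ?thesis
    by (rule Bochner_Integration.integrable_bound) (auto simp: a'_def mult_right_mono)
qed

definition exp_moment :: "'a measure \<Rightarrow> ('a \<Rightarrow> real) \<Rightarrow> nat \<Rightarrow> real \<Rightarrow> real" where
  "exp_moment M g k t = (\<integral>x. g x ^ k * exp (t * g x) \<partial>M)"

context
  fixes M :: "'a measure" and g :: "'a \<Rightarrow> real"
  assumes g[measurable]: "g \<in> borel_measurable M"
    and exp_abs_integrable: "\<And>a. integrable M (\<lambda>x. exp (a * \<bar>g x\<bar>))"
begin

lemma integrable_power_abs_exp_abs: "integrable M (\<lambda>x. \<bar>g x\<bar> ^ k * exp (a * \<bar>g x\<bar>))"
proof (rule Bochner_Integration.integrable_bound
    [OF integrable_mult_right[OF exp_abs_integrable[of "\<bar>a\<bar> + 1"], of "real k ^ k"]])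
  show "AE x in M. norm (\<bar>g x\<bar> ^ k * exp (a * \<bar>g x\<bar>)) \<le> norm (real k ^ k * exp ((\<bar>a\<bar> + 1) * \<bar>g x\<bar>))"
  proof (rule AE_I2)
    fix x
    have "\<bar>g x\<bar> ^ k * exp (a * \<bar>g x\<bar>) \<le> (real k ^ k * exp \<bar>g x\<bar>) * exp (\<bar>a\<bar> * \<bar>g x\<bar>)"
      using power_le_exp[of "\<bar>g x\<bar>" k]
      by (intro mult_mono) (auto intro: mult_right_mono simp: abs_ge_self)
    then show "norm (\<bar>g x\<bar> ^ k * exp (a * \<bar>g x\<bar>)) \<le> norm (real k ^ k * exp ((\<bar>a\<bar> + 1) * \<bar>g x\<bar>))"
      by (simp add: algebra_simps exp_add[symmetric])
  qed
qed simp

lemma integrable_power_exp: "integrable M (\<lambda>x. g x ^ k * exp (t * g x))"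
proof (rule Bochner_Integration.integrable_bound[OF integrable_power_abs_exp_abs[of k "\<bar>t\<bar>"]])
  show "AE x in M. norm (g x ^ k * exp (t * g x)) \<le> norm (\<bar>g x\<bar> ^ k * exp (\<bar>t\<bar> * \<bar>g x\<bar>))"
  proof (rule AE_I2)
    fix x
    have "t * g x \<le> \<bar>t\<bar> * \<bar>g x\<bar>" by (metis abs_ge_self abs_mult)
    then show "norm (g x ^ k * exp (t * g x)) \<le> norm (\<bar>g x\<bar> ^ k * exp (\<bar>t\<bar> * \<bar>g x\<bar>))"
      by (auto simp: abs_mult power_abs intro!: mult_left_mono)
  qed
qed simp

lemma exp_moment_has_real_derivative:
  "(exp_moment M g k has_real_derivative exp_moment M g (Suc k) t) (at t)"
proof -
  define H where "H = exp_moment M g"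
  define E where "E = (\<integral>x. \<bar>g x\<bar> ^ (k + 2) * exp ((\<bar>t\<bar> + 1) * \<bar>g x\<bar>) \<partial>M)"
  have "\<bar>(H k (t + h) - H k t) / h - H (Suc k) t\<bar> \<le> \<bar>h\<bar> * E" if h: "h \<noteq> 0" "\<bar>h\<bar> \<le> 1" for h
  proof -
    define D where "D x = (g x ^ k * exp ((t + h) * g x) - g x ^ k * exp (t * g x)) / h
      - g x ^ Suc k * exp (t * g x)" for x
    have "(H k (t + h) - H k t) / h - H (Suc k) t = (\<integral>x. D x \<partial>M)"
      by (simp add: H_def D_def exp_moment_def integrable_power_exp Bochner_Integration.integrable_diff
          Bochner_Integration.integral_diff integral_divide_zero del: power_Suc)
    also have "norm \<dots> \<le> (\<integral>x. norm (D x) \<partial>M)"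
      by (rule integral_norm_bound)
    also have "\<dots> \<le> (\<integral>x. \<bar>h\<bar> * (\<bar>g x\<bar> ^ (k + 2) * exp ((\<bar>t\<bar> + 1) * \<bar>g x\<bar>)) \<partial>M)"
    proof (rule integral_mono)
      have "integrable M D"
        unfolding D_def by (intro Bochner_Integration.integrable_diff integrable_divide integrable_power_exp)
      then show "integrable M (\<lambda>x. norm (D x))" by simp
      show "integrable M (\<lambda>x. \<bar>h\<bar> * (\<bar>g x\<bar> ^ (k + 2) * exp ((\<bar>t\<bar> + 1) * \<bar>g x\<bar>)))"
        by (intro integrable_mult_right integrable_power_abs_exp_abs)
      show "norm (D x) \<le> \<bar>h\<bar> * (\<bar>g x\<bar> ^ (k + 2) * exp ((\<bar>t\<bar> + 1) * \<bar>g x\<bar>))" for x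
        unfolding D_def real_norm_def by (rule power_exp_difference_quotient_bound[OF h])
    qed
    finally show ?thesis by (simp add: E_def)
  qed
  then have "\<forall>\<^sub>F h in at 0. norm ((H k (t + h) - H k t) / h - H (Suc k) t) \<le> \<bar>h\<bar> * E"
    unfolding eventually_at by (intro exI[of _ 1]) auto
  moreover have "((\<lambda>h. \<bar>h\<bar> * E) \<longlongrightarrow> 0) (at (0::real))"
    by (rule tendsto_eq_intros refl | simp)+
  ultimately have "((\<lambda>h. (H k (t + h) - H k t) / h - H (Suc k) t) \<longlongrightarrow> 0) (at 0)"
    by (rule Lim_null_comparison)
  then show ?thesis
    unfolding DERIV_def H_def by (rule LIM_zero_cancel)
qed

lemma exp_moment_pos:
  assumes "prob_space M" and nonzero: "AE x in M. g x \<noteq> 0" and "even k"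
  shows "exp_moment M g k t > 0"
proof -
  interpret prob_space M by fact
  have nonneg: "0 \<le> g x ^ k * exp (t * g x)" for x
    using \<open>even k\<close> by (simp add: zero_le_even_power)
  have "exp_moment M g k t \<noteq> 0"
  proof
    assume "exp_moment M g k t = 0"
    then have "AE x in M. g x ^ k * exp (t * g x) = 0"
      using integral_nonneg_eq_0_iff_AE[OF integrable_power_exp] nonneg by (auto simp: exp_moment_def)
    with nonzero have "AE x in M. False" by eventually_elim auto
    then show False by simp
  qed
  moreover have "exp_moment M g k t \<ge> 0"
    using nonneg by (simp add: exp_moment_def integral_nonneg)
  ultimately show ?thesis by linarith
qed

end

lemma funpow_deriv_eq:
  assumes "\<And>k x. (F k has_real_derivative F (Suc k) x) (at x)"
  shows "(deriv ^^ k) (F 0) = F k"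
proof (induction k)
  case (Suc k)
  show ?case by (simp add: Suc.IH DERIV_imp_deriv[OF assms] fun_eq_iff)
qed simp

lemma strict_mono_if_deriv_pos:
  fixes f f' :: "real \<Rightarrow> real"
  assumes "\<And>x. (f has_real_derivative f' x) (at x)" "\<And>x. f' x > 0"
  shows "strict_mono f"
  unfolding strict_mono_def by (metis assms DERIV_pos_imp_increasing)

lemma strictly_convex_if_deriv_strict_mono:
  fixes f f' :: "real \<Rightarrow> real"
  assumes d: "\<And>x. (f has_real_derivative f' x) (at x)" and m: "strict_mono f'"
  shows "strictly_convex f"
proof -
  have less: "f ((1 - t) * x + t * y) < (1 - t) * f x + t * f y"
    if xy: "x < y" and t: "0 < t" "t < 1" for x y t
  proof -
    define z where "z = (1 - t) * x + t * y"
    have zx: "z - x = t * (y - x)" and yz: "y - z = (1 - t) * (y - x)"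
      by (simp_all add: z_def algebra_simps)
    have "x < z" "z < y" using zx yz t xy by (metis diff_gt_0_iff_gt mult_pos_pos)+
    obtain a where a: "x < a" "a < z" "f z - f x = (z - x) * f' a"
      using MVT2[OF \<open>x < z\<close>, of f f'] d by blast
    obtain c where c: "z < c" "c < y" "f y - f z = (y - z) * f' c"
      using MVT2[OF \<open>z < y\<close>, of f f'] d by blast
    have "f' a < f' c" using m a c by (meson strict_monoD order.strict_trans)
    have "(1 - t) * f x + t * f y - f z = (1 - t) * (f x - f z) + t * (f y - f z)"
      by (simp add: algebra_simps)
    also have "\<dots> = (1 - t) * (- (t * (y - x) * f' a)) + t * ((1 - t) * (y - x) * f' c)"
    proof -
      have "f x - f z = - (t * (y - x) * f' a)" using a(3) zx by simp
      moreover have "f y - f z = (1 - t) * (y - x) * f' c" using c(3) yz by simp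
      ultimately show ?thesis by (simp only:)
    qed
    also have "\<dots> = t * (1 - t) * (y - x) * (f' c - f' a)"
      by (simp add: algebra_simps)
    also have "\<dots> > 0" using t xy \<open>f' a < f' c\<close> by simp
    finally show ?thesis unfolding z_def by simp
  qed
  show ?thesis
    unfolding strictly_convex_def
  proof (intro allI impI)
    fix x y t :: real assume "x \<noteq> y" "0 < t" "t < 1"
    then consider "x < y" | "y < x" by linarith
    then show "f ((1 - t) * x + t * y) < (1 - t) * f x + t * f y"
    proof cases
      case 2
      then show ?thesis using less[of y x "1 - t"] \<open>0 < t\<close> \<open>t < 1\<close> by (simp add: algebra_simps)
    qed (use less \<open>0 < t\<close> \<open>t < 1\<close> in auto)
  qed
qed

section \<open>The standard normal distribution function and its quantile\<close>

definition std_normal_measure :: "real measure" where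
  "std_normal_measure = density lborel (\<lambda>x. ennreal (std_normal_density x))"

lemma real_distribution_std_normal_measure: "real_distribution std_normal_measure"
proof -
  interpret prob_space std_normal_measure
    using prob_space_normal_density by (simp add: std_normal_measure_def)
  show ?thesis by unfold_locales (simp_all add: std_normal_measure_def)
qed

interpretation std_normal: real_distribution std_normal_measure
  by (rule real_distribution_std_normal_measure)

lemma measure_std_normal_measure:
  assumes "A \<in> sets borel"
  shows "measure std_normal_measure A = (LBINT t:A. std_normal_density t)"
proof -
  have "emeasure std_normal_measure A = (\<integral>\<^sup>+ t. ennreal (indicator A t * std_normal_density t) \<partial>lborel)"
    using assms unfolding std_normal_measure_def
    by (simp add: emeasure_density) (auto intro!: nn_integral_cong split: split_indicator)
  also have "\<dots> = ennreal (\<integral> t. indicator A t * std_normal_density t \<partial>lborel)"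
    using assms integrable_real_mult_indicator[of A lborel std_normal_density]
    by (intro nn_integral_eq_integral) (auto simp: mult.commute)
  finally show ?thesis
    by (simp add: measure_def set_lebesgue_integral_def)
qed

lemma std_normal_cdf_eq_cdf: "std_normal_cdf = cdf std_normal_measure"
  by (auto simp: std_normal_cdf_def cdf_def measure_std_normal_measure)

lemma std_normal_cdf_at_top: "(std_normal_cdf \<longlongrightarrow> 1) at_top"
  unfolding std_normal_cdf_eq_cdf by (rule std_normal.cdf_lim_at_top_prob)

lemma std_normal_cdf_at_bot: "(std_normal_cdf \<longlongrightarrow> 0) at_bot"
  unfolding std_normal_cdf_eq_cdf by (rule std_normal.cdf_lim_at_bot)

lemma has_real_derivative_std_normal_cdf:
  "(std_normal_cdf has_real_derivative std_normal_density x) (at x)"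
proof -
  let ?F = "\<lambda>u. std_normal_cdf (x - 1) + (LBINT y=(x-1)..u. std_normal_density y)"
  have "continuous_on {x-1..x+1} std_normal_density"
    unfolding std_normal_density_def by (intro continuous_intros) auto
  then have "((\<lambda>u. LBINT y=(x-1)..u. std_normal_density y) has_vector_derivative std_normal_density x)
      (at x within {x-1..x+1})"
    by (intro interval_integral_FTC2) auto
  then have "(?F has_real_derivative std_normal_density x) (at x)"
    using at_within_Icc_at[of "x-1" x "x+1"]
    by (auto simp: has_real_derivative_iff_has_vector_derivative intro!: derivative_eq_intros)
  then show ?thesis
  proof (rule has_field_derivative_transform_within_open[of _ _ _ "{x-1<..}"])
    fix u assume u: "u \<in> {x-1<..}"
    have "std_normal_cdf u - std_normal_cdf (x-1) = measure std_normal_measure {x-1<..u}"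
      unfolding std_normal_cdf_eq_cdf using u by (intro std_normal.cdf_diff_eq) auto
    also have "\<dots> = (LBINT y=(x-1)..u. std_normal_density y)"
      using u by (simp add: measure_std_normal_measure interval_integral_Ioc)
    finally show "?F u = std_normal_cdf u" by simp
  qed auto
qed

lemma isCont_std_normal_cdf: "isCont std_normal_cdf x"
  using has_real_derivative_std_normal_cdf by (rule DERIV_isCont)

lemma strict_mono_std_normal_cdf: "strict_mono std_normal_cdf"
proof (rule strict_monoI)
  fix x y :: real assume "x < y"
  then show "std_normal_cdf x < std_normal_cdf y"
    by (rule DERIV_pos_imp_increasing)
       (use has_real_derivative_std_normal_cdf normal_density_pos[of 1] in auto)
qed

lemma std_normal_cdf_le_iff: "std_normal_cdf x \<le> std_normal_cdf y \<longleftrightarrow> x \<le> y"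
  using strict_mono_std_normal_cdf by (rule strict_mono_less_eq)

lemma std_normal_cdf_minus: "std_normal_cdf (- x) = 1 - std_normal_cdf x"
proof -
  define S where "S x = std_normal_cdf (- x) + std_normal_cdf x" for x
  have "(S has_real_derivative 0) (at x)" for x
  proof -
    have "(S has_real_derivative std_normal_density (- x) * (- 1) + std_normal_density x) (at x)"
      unfolding S_def[abs_def]
      by (rule derivative_eq_intros DERIV_chain2[OF has_real_derivative_std_normal_cdf]
          has_real_derivative_std_normal_cdf refl | simp)+
    then show ?thesis by (simp add: std_normal_density_def)
  qed
  then have const: "S y = S 0" for y using DERIV_isconst_all by blast
  have "(S \<longlongrightarrow> 0 + 1) at_top"
    unfolding S_def by (intro tendsto_add std_normal_cdf_at_top
        filterlim_compose[OF std_normal_cdf_at_bot] filterlim_uminus_at_bot_at_top)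
  moreover have "S = (\<lambda>_. S 0)" using const by blast
  ultimately have "S 0 = 1"
    by (metis add_0 tendsto_const_iff trivial_limit_at_top_linorder)
  then show ?thesis using const[of x] by (simp add: S_def)
qed

lemma std_normal_cdf_pos: "0 < std_normal_cdf x"
  using strict_monoD[OF strict_mono_std_normal_cdf, of "x - 1" x]
    std_normal.cdf_nonneg[of "x - 1"] by (simp add: std_normal_cdf_eq_cdf)

lemma std_normal_cdf_less_1: "std_normal_cdf x < 1"
  using std_normal_cdf_minus[of "- x"] std_normal_cdf_pos[of "- x"] by simp

lemma std_normal_cdf_0: "std_normal_cdf 0 = 1 / 2"
  using std_normal_cdf_minus[of 0] by simp

lemma std_normal_cdf_tail:
  assumes t: "1 \<le> t"
  shows "std_normal_cdf (- t) \<le> exp (- t\<^sup>2 / 2)"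
proof -
  define D where "D s = exp (- s\<^sup>2 / 2) - std_normal_cdf (- s)" for s
  have deriv: "(D has_real_derivative (exp (- s\<^sup>2 / 2) * (- s) + std_normal_density (- s))) (at s)" for s
    unfolding D_def[abs_def]
    by (rule derivative_eq_intros DERIV_chain2[OF has_real_derivative_std_normal_cdf] refl | simp)+
  have "D s \<le> D t" if "t \<le> s" for s
  proof (rule DERIV_nonpos_imp_decreasing_open[OF that])
    fix x assume x: "t < x" "x < s"
    have "1 \<le> sqrt (2 * pi)" using pi_gt3 by (simp add: real_le_rsqrt)
    then have "std_normal_density (- x) \<le> exp (- x\<^sup>2 / 2) * 1"
      by (simp add: std_normal_density_def divide_le_eq)
    also have "\<dots> \<le> exp (- x\<^sup>2 / 2) * x" using x t by (intro mult_left_mono) auto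
    finally show "\<exists>y. (D has_real_derivative y) (at x) \<and> y \<le> 0"
      using deriv[of x] by auto
  next
    show "continuous_on {t..s} D"
      using deriv by (meson DERIV_continuous continuous_at_imp_continuous_on)
  qed
  moreover have "(D \<longlongrightarrow> 0 - 0) at_top"
    unfolding D_def
  proof (intro tendsto_diff filterlim_compose[OF std_normal_cdf_at_bot] filterlim_uminus_at_bot_at_top)
    show "((\<lambda>s::real. exp (- s\<^sup>2 / 2)) \<longlongrightarrow> 0) at_top" by real_asymp
  qed
  ultimately have "0 \<le> D t"
    by (intro tendsto_le[OF _ tendsto_const, of at_top D])
       (auto intro!: eventually_at_top_linorderI[of t])
  then show ?thesis by (simp add: D_def)
qed

lemma std_normal_quantile_cdf: "std_normal_quantile (std_normal_cdf t) = t"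
proof -
  have "{x. std_normal_cdf t \<le> std_normal_cdf x} = {t..}"
    by (auto simp: std_normal_cdf_le_iff)
  then show ?thesis by (simp add: std_normal_quantile_def)
qed

lemma std_normal_cdf_quantile:
  assumes p: "0 < p" "p < 1"
  shows "std_normal_cdf (std_normal_quantile p) = p"
proof -
  obtain a where a: "std_normal_cdf a < p"
    using order_tendstoD(2)[OF std_normal_cdf_at_bot p(1)] by (auto simp: eventually_at_bot_linorder)
  obtain b where b: "p < std_normal_cdf b"
    using order_tendstoD(1)[OF std_normal_cdf_at_top p(2)] by (auto simp: eventually_at_top_linorder)
  have "a \<le> b" using a b std_normal_cdf_le_iff[of b a] by linarith
  moreover have "continuous_on {a..b} std_normal_cdf"
    using isCont_std_normal_cdf by (simp add: continuous_at_imp_continuous_on)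
  ultimately obtain t where "std_normal_cdf t = p"
    using IVT'[of std_normal_cdf a p b] a b by auto
  then show ?thesis using std_normal_quantile_cdf by metis
qed

lemma std_normal_quantile_ge_iff:
  "0 < p \<Longrightarrow> p < 1 \<Longrightarrow> t \<le> std_normal_quantile p \<longleftrightarrow> std_normal_cdf t \<le> p"
  by (metis std_normal_cdf_quantile std_normal_cdf_le_iff)

lemma std_normal_quantile_le_iff:
  "0 < p \<Longrightarrow> p < 1 \<Longrightarrow> std_normal_quantile p \<le> t \<longleftrightarrow> p \<le> std_normal_cdf t"
  by (metis std_normal_cdf_quantile std_normal_cdf_le_iff)

lemma std_normal_quantile_one_minus:
  "0 < p \<Longrightarrow> p < 1 \<Longrightarrow> std_normal_quantile (1 - p) = - std_normal_quantile p"
  by (metis std_normal_cdf_minus std_normal_cdf_quantile std_normal_quantile_cdf)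

lemma std_normal_quantile_eq_0_iff:
  "0 < p \<Longrightarrow> p < 1 \<Longrightarrow> std_normal_quantile p = 0 \<longleftrightarrow> p = 1 / 2"
  by (metis std_normal_cdf_0 std_normal_cdf_quantile std_normal_quantile_cdf)

text \<open>Outside \<open>(0, 1)\<close> the quantile is the junk value \<open>Inf UNIV\<close> resp. \<open>Inf {}\<close>; it is
  constant there, hence Borel measurable on all of \<open>\<real>\<close>.\<close>

lemma borel_measurable_std_normal_quantile[measurable]:
  "std_normal_quantile \<in> borel_measurable borel"
proof -
  define Q where "Q p = (if p \<in> {0<..<1} then std_normal_quantile p else 0)" for p
  have "std_normal_quantile \<in> borel_measurable (restrict_space borel {0<..<1})"
    by (rule borel_measurable_mono_on_fnc)
       (auto intro!: mono_onI simp: std_normal_quantile_le_iff std_normal_cdf_quantile)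
  then have [measurable]: "Q \<in> borel_measurable borel"
    unfolding Q_def[abs_def] by (subst measurable_restrict_space_iff[symmetric]) auto
  have "p \<le> std_normal_cdf x" if "p \<le> 0" for p x using std_normal_cdf_pos[of x] that by linarith
  moreover have "\<not> p \<le> std_normal_cdf x" if "1 \<le> p" for p x using std_normal_cdf_less_1[of x] that by linarith
  ultimately have "std_normal_quantile = (\<lambda>p. if p \<in> {0<..<1} then Q p
      else if p \<le> 0 then Inf UNIV else Inf {})"
    by (auto simp: fun_eq_iff std_normal_quantile_def Q_def)
  also have "\<dots> \<in> borel_measurable borel" by measurable
  finally show ?thesis .
qed

section \<open>Lebesgue--Stieltjes measures on the unit interval\<close>

definition clamp_unit :: "real \<Rightarrow> real" where
  "clamp_unit x = max 0 (min 1 x)"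

lemma clamp_unit_one_minus: "clamp_unit (1 - x) = 1 - clamp_unit x"
  by (simp add: clamp_unit_def max_def min_def)

lemma sets_LS_measure[simp, measurable_cong]: "sets (LS_measure G) = sets borel"
  by (simp add: LS_measure_def)

locale unit_interval_cdf =
  fixes G :: "real \<Rightarrow> real"
  assumes continuous: "continuous_on {0..1} G" and mono: "mono_on {0..1} G"
    and at_0: "G 0 = 0" and at_1: "G 1 = 1"
begin

lemma mono_clamp: "x \<le> y \<Longrightarrow> G (clamp_unit x) \<le> G (clamp_unit y)"
  unfolding clamp_unit_def by (intro mono_onD[OF mono]) auto

lemma continuous_clamp: "continuous_on UNIV (\<lambda>x. G (clamp_unit x))"
  unfolding clamp_unit_def by (rule continuous_on_compose2[OF continuous]) (auto intro!: continuous_intros)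

lemma LS_measure_eq: "LS_measure G = interval_measure (\<lambda>x. G (clamp_unit x))"
  by (simp add: LS_measure_def clamp_unit_def)

lemma right_continuous_clamp: "continuous (at_right x) (\<lambda>x. G (clamp_unit x))"
  using continuous_clamp by (simp add: continuous_on_eq_continuous_within continuous_at_imp_continuous_at_within)

lemma clamp_at_bot: "((\<lambda>x. G (clamp_unit x)) \<longlongrightarrow> 0) at_bot"
  by (rule tendsto_eventually) (auto simp: clamp_unit_def at_0 eventually_at_bot_linorder intro!: exI[of _ 0])

lemma clamp_at_top: "((\<lambda>x. G (clamp_unit x)) \<longlongrightarrow> 1) at_top"
  by (rule tendsto_eventually) (auto simp: clamp_unit_def at_1 eventually_at_top_linorder intro!: exI[of _ 1])

lemma real_distribution: "real_distribution (LS_measure G)"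
  unfolding LS_measure_eq
  by (rule real_distribution_interval_measure[OF mono_clamp right_continuous_clamp clamp_at_bot clamp_at_top])

lemma emeasure_Icc: "a \<le> b \<Longrightarrow> emeasure (LS_measure G) {a..b} = G (clamp_unit b) - G (clamp_unit a)"
  unfolding LS_measure_eq by (rule emeasure_interval_measure_Icc[OF _ mono_clamp continuous_clamp])

lemma measure_Icc:
  assumes "0 \<le> a" "a \<le> b" "b \<le> 1"
  shows "measure (LS_measure G) {a..b} = G b - G a"
  using emeasure_Icc[of a b] mono_clamp[of a b] assms by (simp add: measure_def clamp_unit_def)

lemma emeasure_singleton: "emeasure (LS_measure G) {x} = 0"
  using emeasure_Icc[of x x] by simp

lemma cdf_LS_measure: "cdf (LS_measure G) = (\<lambda>x. G (clamp_unit x))"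
  unfolding LS_measure_eq by (rule cdf_interval_measure[OF mono_clamp right_continuous_clamp clamp_at_bot])

lemma prob_space_restrict: "prob_space (restrict_space (LS_measure G) {0..1})"
  using emeasure_Icc[of 0 1] by (intro prob_space_restrict_space) (auto simp: clamp_unit_def at_0 at_1)

lemma emeasure_restrict_singleton: "emeasure (restrict_space (LS_measure G) {0..1}) {x} = 0"
proof (cases "x \<in> {0..1}")
  case True
  then show ?thesis using emeasure_singleton by (subst emeasure_restrict_space) auto
next
  case False
  then have "{x} \<notin> sets (restrict_space (LS_measure G) {0..1})" by (subst sets_restrict_space_iff) auto
  then show ?thesis by (simp add: emeasure_notin_sets)
qed

end

section \<open>Weighting functions\<close>

locale weighting_function =
  fixes w :: "real \<Rightarrow> real"
  assumes assumption1: "assumption1 w"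
begin

lemma continuous_w: "continuous_on {0..1} w"
  and mono_w: "mono_on {0..1} w"
  and w_0: "w 0 = 0" and w_1: "w 1 = 1"
  using assumption1 strict_mono_on_imp_mono_on unfolding assumption1_def by auto

sublocale W: unit_interval_cdf w
  by unfold_locales (fact continuous_w mono_w w_0 w_1)+

sublocale D: unit_interval_cdf "dual_w w"
proof
  show "continuous_on {0..1} (dual_w w)"
    unfolding dual_w_def[abs_def] by (intro continuous_intros continuous_on_compose2[OF continuous_w]) auto
  show "mono_on {0..1} (dual_w w)"
    unfolding dual_w_def by (rule mono_onI) (auto intro!: mono_onD[OF mono_w])
qed (simp_all add: dual_w_def w_0 w_1)

text \<open>Integrating the derivative bound of Assumption 1 against the comparison function
  \<open>g s = c / b * (s powr b - (1 - s) powr b)\<close>, \<open>b = 1 + \<alpha>\<close>, whose derivative is exactly that bound.\<close>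

lemma weight_power_bound:
  "\<exists>C b. 0 < C \<and> 0 < b \<and> (\<forall>s\<in>{0..1}. w s \<le> C * s powr b \<and> 1 - w (1 - s) \<le> C * s powr b)"
proof -
  obtain c \<alpha> where c: "c > 0" and \<alpha>: "-1 < \<alpha>" "\<alpha> < 0"
    and deriv_le: "\<And>p. p \<in> {0<..<1} \<Longrightarrow> deriv w p \<le> c * (p powr \<alpha> + (1 - p) powr \<alpha>)"
    using assumption1 unfolding assumption1_def by blast
  have w_deriv: "(w has_real_derivative deriv w x) (at x)" if "x \<in> {0<..<1}" for x
    using assumption1 that unfolding assumption1_def C1_differentiable_on_def
    by (metis DERIV_imp_deriv has_real_derivative_iff_has_vector_derivative)
  define b where "b = 1 + \<alpha>"
  have b: "0 < b" "b \<le> 1" using \<alpha> by (auto simp: b_def)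
  define g where "g s = c / b * (s powr b - (1 - s) powr b)" for s
  have g_deriv: "(g has_real_derivative c * (s powr \<alpha> + (1 - s) powr \<alpha>)) (at s)" if "s \<in> {0<..<1}" for s
  proof -
    have "(g has_real_derivative c / b * (b * s powr (b - 1) - b * (1 - s) powr (b - 1) * (- 1))) (at s)"
      unfolding g_def[abs_def] using that
      by (intro derivative_eq_intros has_real_derivative_powr refl
          DERIV_chain2[OF has_real_derivative_powr]) auto
    moreover have "c / b * (b * s powr (b - 1) - b * (1 - s) powr (b - 1) * (- 1))
        = c * (s powr \<alpha> + (1 - s) powr \<alpha>)"
      using b by (simp add: b_def field_simps)
    ultimately show ?thesis by simp
  qed
  have g_cont: "continuous_on {0..1} g"
    unfolding g_def[abs_def] using b by (intro continuous_intros continuous_on_powr') auto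
  have increment: "w y - w x \<le> g y - g x" if xy: "0 \<le> x" "x \<le> y" "y \<le> 1" for x y
  proof -
    have "g x - w x \<le> g y - w y"
    proof (rule DERIV_nonneg_imp_increasing_open[OF \<open>x \<le> y\<close>])
      fix z assume "x < z" "z < y"
      then have z: "z \<in> {0<..<1}" using xy by auto
      show "\<exists>d. ((\<lambda>u. g u - w u) has_real_derivative d) (at z) \<and> 0 \<le> d"
        using DERIV_diff[OF g_deriv[OF z] w_deriv[OF z]] deriv_le[OF z] by auto
    next
      show "continuous_on {x..y} (\<lambda>u. g u - w u)"
        using g_cont continuous_w xy by (intro continuous_intros) (auto elim: continuous_on_subset)
    qed
    then show ?thesis by simp
  qed
  have concave: "1 - (1 - s) powr b \<le> s powr b" if "0 \<le> s" "s \<le> 1" for s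
    using powr_mono'[of b 1 s] powr_mono'[of b 1 "1 - s"] that b by (cases "s = 0 \<or> s = 1") auto
  have g_increment: "g s - g 0 \<le> 2 * c / b * s powr b" "g 1 - g (1 - s) \<le> 2 * c / b * s powr b"
    if "0 \<le> s" "s \<le> 1" for s
  proof -
    have "g s - g 0 = c / b * (s powr b + (1 - (1 - s) powr b))"
      and "g 1 - g (1 - s) = c / b * (s powr b + (1 - (1 - s) powr b))"
      using b by (simp_all add: g_def algebra_simps)
    moreover have "c / b * (s powr b + (1 - (1 - s) powr b)) \<le> c / b * (s powr b + s powr b)"
      using concave[OF that] c b by (intro mult_left_mono add_left_mono) auto
    ultimately show "g s - g 0 \<le> 2 * c / b * s powr b" "g 1 - g (1 - s) \<le> 2 * c / b * s powr b"
      by (simp_all add: algebra_simps)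
  qed
  show ?thesis
  proof (intro exI conjI ballI)
    fix s :: real assume "s \<in> {0..1}"
    then show "w s \<le> 2 * c / b * s powr b" "1 - w (1 - s) \<le> 2 * c / b * s powr b"
      using increment[of 0 s] increment[of "1 - s" 1] g_increment[of s] w_0 w_1 by auto
  qed (use c b in auto)
qed

lemma LS_measure_dual_eq_distr: "LS_measure (dual_w w) = distr (LS_measure w) borel (\<lambda>q. 1 - q)"
proof -
  interpret W: real_distribution "LS_measure w" by (rule W.real_distribution)
  have "cdf (distr (LS_measure w) borel (\<lambda>q. 1 - q)) x = dual_w w (clamp_unit x)" for x
  proof -
    have "cdf (distr (LS_measure w) borel (\<lambda>q. 1 - q)) x = measure (LS_measure w) (UNIV - {..<1 - x})"
      unfolding cdf_def by (subst measure_distr) (auto intro!: arg_cong[where f = "measure _"])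
    also have "\<dots> = 1 - measure (LS_measure w) {..<1 - x}"
      using W.prob_compl[of "{..<1 - x}"] by simp
    also have "measure (LS_measure w) {..<1 - x} = measure (LS_measure w) {..1 - x}"
      using W.finite_measure_Union[of "{..<1 - x}" "{1 - x}"] W.emeasure_singleton[of "1 - x"]
      by (simp add: measure_def ivl_disj_un_singleton(2)[symmetric])
    also have "\<dots> = w (clamp_unit (1 - x))"
      using W.cdf_LS_measure by (simp add: cdf_def fun_eq_iff)
    finally show ?thesis by (simp add: dual_w_def clamp_unit_one_minus)
  qed
  then show ?thesis
    by (intro cdf_unique[OF D.real_distribution] W.real_distribution_distr)
       (auto simp: D.cdf_LS_measure)
qed

text \<open>At the endpoints, where the quantile takes junk values, \<open>dw\<close> has no atoms.\<close>

lemma set_integral_dual_quantile: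
  fixes f :: "real \<Rightarrow> real"
  assumes [measurable]: "f \<in> borel_measurable borel"
  shows "(LINT p:{0..1}|LS_measure (dual_w w). f (std_normal_quantile p))
    = (LINT q:{0..1}|LS_measure w. f (- std_normal_quantile q))"
proof -
  have "(LINT p:{0..1}|LS_measure (dual_w w). f (std_normal_quantile p))
      = (\<integral>q. indicator {0..1} (1 - q) *\<^sub>R f (std_normal_quantile (1 - q)) \<partial>LS_measure w)"
    unfolding set_lebesgue_integral_def LS_measure_dual_eq_distr by (rule integral_distr) measurable
  also have "\<dots> = (\<integral>q. indicator {0..1} q *\<^sub>R f (- std_normal_quantile q) \<partial>LS_measure w)"
  proof (rule integral_discrete_difference[of "{0, 1}"])
    fix q :: real assume "q \<notin> {0, 1}"
    then show "indicator {0..1} (1 - q) *\<^sub>R f (std_normal_quantile (1 - q))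
        = indicator {0..1} q *\<^sub>R f (- std_normal_quantile q)"
      by (cases "0 < q \<and> q < 1") (auto simp: indicator_def std_normal_quantile_one_minus)
  qed (auto simp: W.emeasure_singleton)
  finally show ?thesis
    unfolding set_lebesgue_integral_def .
qed

abbreviation dual_prob :: "real measure" where
  "dual_prob \<equiv> restrict_space (LS_measure (dual_w w)) {0..1}"

lemma quantile_tail_bound:
  "\<exists>K b. 0 < b \<and> (\<forall>n::nat.
     measure dual_prob {p\<in>space dual_prob. real n \<le> \<bar>std_normal_quantile p\<bar>} \<le> K * exp (- b * (real n)\<^sup>2))"
proof -
  obtain C \<beta> where C: "0 < C" and \<beta>: "0 < \<beta>"
    and bound: "\<And>s. s \<in> {0..1} \<Longrightarrow> w s \<le> C * s powr \<beta> \<and> 1 - w (1 - s) \<le> C * s powr \<beta>"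
    using weight_power_bound by blast
  interpret P: prob_space dual_prob by (rule D.prob_space_restrict)
  have "measure dual_prob {p\<in>space dual_prob. real n \<le> \<bar>std_normal_quantile p\<bar>}
      \<le> (2 * C + 1) * exp (- (\<beta> / 2) * (real n)\<^sup>2)" for n :: nat
  proof (cases "n = 0")
    case True
    have "measure dual_prob {p\<in>space dual_prob. real n \<le> \<bar>std_normal_quantile p\<bar>} \<le> 1"
      by (rule P.prob_le_1)
    moreover have "(2 * C + 1) * exp (- (\<beta> / 2) * (real n)\<^sup>2) = 2 * C + 1" using True by simp
    ultimately show ?thesis using C by linarith
  next
    case False
    define s where "s = std_normal_cdf (- real n)"
    have s: "0 \<le> s" "s \<le> 1" using std_normal_cdf_pos std_normal_cdf_less_1 by (auto simp: s_def less_imp_le)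
    have "{p\<in>space dual_prob. real n \<le> \<bar>std_normal_quantile p\<bar>} \<subseteq> {0..s} \<union> {1 - s..1}"
    proof
      fix p assume p: "p \<in> {p\<in>space dual_prob. real n \<le> \<bar>std_normal_quantile p\<bar>}"
      show "p \<in> {0..s} \<union> {1 - s..1}"
      proof (cases "p = 0 \<or> p = 1")
        case False
        then have "0 < p" "p < 1" using p by (auto simp: space_restrict_space)
        moreover have "real n \<le> std_normal_quantile p \<or> std_normal_quantile p \<le> - real n"
          using p by auto
        ultimately have "1 - s \<le> p \<or> p \<le> s"
          using std_normal_cdf_minus[of "real n"]
          by (simp add: s_def std_normal_quantile_ge_iff std_normal_quantile_le_iff)
        then show ?thesis using \<open>0 < p\<close> \<open>p < 1\<close> by auto
      qed (use s in auto)
    qed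
    then have "measure dual_prob {p\<in>space dual_prob. real n \<le> \<bar>std_normal_quantile p\<bar>}
        \<le> measure dual_prob {0..s} + measure dual_prob {1 - s..1}"
      by (intro order_trans[OF P.finite_measure_mono measure_subadditive])
         (use s in \<open>simp_all add: sets_restrict_space_iff P.emeasure_finite\<close>)
    also have "\<dots> = (1 - w (1 - s)) + w s"
      using s by (simp add: measure_restrict_space D.measure_Icc dual_w_def w_0 w_1)
    also have "\<dots> \<le> 2 * C * exp (- (real n)\<^sup>2 / 2) powr \<beta>"
    proof -
      have "s powr \<beta> \<le> exp (- (real n)\<^sup>2 / 2) powr \<beta>"
        using s \<beta> std_normal_cdf_tail[of "real n"] False by (intro powr_mono2) (auto simp: s_def)
      then have "C * s powr \<beta> \<le> C * exp (- (real n)\<^sup>2 / 2) powr \<beta>"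
        using C by (intro mult_left_mono) auto
      moreover have "w s \<le> C * s powr \<beta>" "1 - w (1 - s) \<le> C * s powr \<beta>" using bound[of s] s by auto
      ultimately show ?thesis by linarith
    qed
    also have "\<dots> \<le> (2 * C + 1) * exp (- (\<beta> / 2) * (real n)\<^sup>2)"
      by (simp add: powr_def)
    finally show ?thesis .
  qed
  then show ?thesis using \<beta> by (intro exI[of _ "2 * C + 1"] exI[of _ "\<beta> / 2"]) auto
qed

lemma integrable_exp_abs_quantile: "integrable dual_prob (\<lambda>p. exp (a * \<bar>std_normal_quantile p\<bar>))"
proof -
  interpret P: prob_space dual_prob by (rule D.prob_space_restrict)
  obtain K b where "0 < b"
    "\<And>n::nat. measure dual_prob {p\<in>space dual_prob. real n \<le> \<bar>std_normal_quantile p\<bar>} \<le> K * exp (- b * (real n)\<^sup>2)"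
    using quantile_tail_bound by blast
  then show ?thesis
    by (intro P.integrable_exp_abs_of_gaussian_tail) (auto intro: measurable_restrict_space1)
qed

lemma borel_measurable_quantile_dual_prob[measurable]: "std_normal_quantile \<in> borel_measurable dual_prob"
  by (intro measurable_restrict_space1) simp

definition quantile_moment :: "nat \<Rightarrow> real \<Rightarrow> real" where
  "quantile_moment = exp_moment dual_prob (\<lambda>p. - std_normal_quantile p)"

lemma quantile_moment_has_real_derivative:
  "(quantile_moment k has_real_derivative quantile_moment (Suc k) x) (at x)"
  unfolding quantile_moment_def
  by (rule exp_moment_has_real_derivative) (simp_all add: integrable_exp_abs_quantile)

lemma quantile_moment_eq_dual:
  "quantile_moment k x = (LINT p:{0..1}|LS_measure (dual_w w).
     (- std_normal_quantile p) ^ k * exp (- x * std_normal_quantile p))"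
  by (simp add: quantile_moment_def exp_moment_def set_lebesgue_integral_def integral_restrict_space)

lemma quantile_moment_eq_w:
  "quantile_moment k x = (LINT p:{0..1}|LS_measure w.
     std_normal_quantile p ^ k * exp (x * std_normal_quantile p))"
  using set_integral_dual_quantile[of "\<lambda>v. (- v) ^ k * exp (- x * v)"]
  by (simp add: quantile_moment_eq_dual)

lemma AE_quantile_nonzero: "AE p in dual_prob. std_normal_quantile p \<noteq> 0"
proof -
  have "AE p in dual_prob. p \<notin> {0, 1 / 2, 1}"
    by (rule AE_discrete_difference) (auto simp: D.emeasure_restrict_singleton sets_restrict_space_iff)
  then show ?thesis
    by (rule AE_mp) (auto simp: space_restrict_space std_normal_quantile_eq_0_iff)
qed

lemma quantile_moment_pos: "even k \<Longrightarrow> 0 < quantile_moment k x"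
  unfolding quantile_moment_def
  by (rule exp_moment_pos)
     (simp_all add: integrable_exp_abs_quantile D.prob_space_restrict AE_quantile_nonzero)

lemma quantile_moment_0_0: "quantile_moment 0 0 = 1"
proof -
  interpret prob_space dual_prob by (rule D.prob_space_restrict)
  show ?thesis using prob_space by (simp add: quantile_moment_def exp_moment_def space_restrict_space)
qed

lemma nn_integral_exp_quantile_finite:
  "(\<integral>\<^sup>+ p\<in>{0..1}. ennreal (exp (- x * std_normal_quantile p)) \<partial>LS_measure (dual_w w)) < \<infinity>"
proof -
  have "integrable dual_prob (\<lambda>p. exp (- x * std_normal_quantile p))"
    using integrable_power_exp[where M = dual_prob and g = "\<lambda>p. - std_normal_quantile p" and k = 0 and t = x]
    by (simp add: integrable_exp_abs_quantile)
  then show ?thesis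
    by (auto dest!: integrableD(2) simp: nn_integral_restrict_space top.not_eq_extremum)
qed

end

theorem lemmaA1:
  fixes w h :: "real \<Rightarrow> real"
  assumes A1: "assumption1 w"
    and h_def: "\<And>x. h x = (LINT p:{0..1}|LS_measure (dual_w w). exp (- x * std_normal_quantile p))"
  shows "h 0 = 1
    \<and> (\<forall>x. (\<integral>\<^sup>+ p\<in>{0..1}. ennreal (exp (- x * std_normal_quantile p)) \<partial>LS_measure (dual_w w)) < \<infinity>)
    \<and> (\<forall>k x. ((deriv ^^ k) h has_real_derivative (deriv ^^ Suc k) h x) (at x))
    \<and> (\<forall>k x. (deriv ^^ k) h x
          = (LINT p:{0..1}|LS_measure (dual_w w). (- std_normal_quantile p) ^ k * exp (- x * std_normal_quantile p))
        \<and> (deriv ^^ k) h x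
          = (LINT p:{0..1}|LS_measure w. (std_normal_quantile p) ^ k * exp (x * std_normal_quantile p)))
    \<and> (\<forall>k. even k \<longrightarrow> (\<forall>x. (deriv ^^ k) h x > 0) \<and> strictly_convex ((deriv ^^ k) h))
    \<and> (\<forall>k. odd k \<longrightarrow> strict_mono ((deriv ^^ k) h))"
proof -
  interpret weighting_function w by unfold_locales (fact A1)
  have h: "h = quantile_moment 0"
    using h_def by (simp add: fun_eq_iff quantile_moment_eq_dual)
  have derivs: "(deriv ^^ k) (quantile_moment 0) = quantile_moment k" for k
    by (rule funpow_deriv_eq[of quantile_moment, OF quantile_moment_has_real_derivative])
  have odd_mono: "strict_mono (quantile_moment k)" if "odd k" for k
    by (rule strict_mono_if_deriv_pos[OF quantile_moment_has_real_derivative])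
       (simp add: quantile_moment_pos \<open>odd k\<close>)
  have even_convex: "strictly_convex (quantile_moment k)" if "even k" for k
    by (rule strictly_convex_if_deriv_strict_mono[OF quantile_moment_has_real_derivative odd_mono])
       (simp add: \<open>even k\<close>)
  show ?thesis
    unfolding h derivs
    by (intro conjI allI impI quantile_moment_0_0 nn_integral_exp_quantile_finite
        quantile_moment_has_real_derivative quantile_moment_eq_dual quantile_moment_eq_w
        quantile_moment_pos odd_mono even_convex)
qed

end
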